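(* Let $V$ be a real symmetric positive-definite $N\times N$ matrix and $\alpha>0$. Then: 1) $L_-$ and its orthogonal complement $L_0$ in $\mathbb R^{2N}$ are invariant under $A$; 2) the spectrum of the restriction $A_-$ of $A$ to $L_-$ lies in the open left half-plane, $\|e^{tA_-}\|\to0$ exponentially fast as $t\to\infty$, and $$L_-=\{\psi\in\mathbb R^{2N}: H(e^{tA}\psi)\to0\text{ as }t\to\infty\}.$$
   Context: $\psi=(q,p)\in\mathbb R^{2N}$, $H(\psi)=\frac12\sum_ip_i^2+\frac12\sum_{i,j}V(i,j)q_iq_j$. $A=\begin{pmatrix}0&E\\-V&-\alpha D\end{pmatrix}$, where $E$ is the $N\times N$ identity and $D$ is the diagonal $N\times N$ matrix with $D_{11}=1$ and all other entries $0$ (damping acting on $p_1$ only). $l_V$ is the span of $V^ke_1$, $k\ge0$ ($e_1$ the first standard basis vector of $\mathbb R^N$), and $L_-=\{(q,p):q,p\in l_V\}$. *)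

theory Defs
  imports "HOL-Analysis.Analysis"
begin

text \<open>Phase space R^{2N} is rendered as pairs (q,p) of vectors in real^'n
 (the product inner product is the standard one on R^{2N}).
 The distinguished index i0 plays the role of the first coordinate (e_1).\<close>

definition oscA :: "real^'n^'n \<Rightarrow> real \<Rightarrow> 'n \<Rightarrow> ((real^'n) \<times> (real^'n)) \<Rightarrow> ((real^'n) \<times> (real^'n))" where
  "oscA V \<alpha> i0 \<psi> = (snd \<psi>, - (V *v fst \<psi>) - \<alpha> *\<^sub>R (\<chi> i. if i = i0 then snd \<psi> $ i else 0))"

definition hamH :: "real^'n^'n \<Rightarrow> ((real^'n) \<times> (real^'n)) \<Rightarrow> real" where
  "hamH V \<psi> = (1/2) * (\<Sum>i\<in>UNIV. (snd \<psi> $ i)^2)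
      + (1/2) * (\<Sum>i\<in>UNIV. \<Sum>j\<in>UNIV. V $ i $ j * (fst \<psi> $ i) * (fst \<psi> $ j))"

definition lV :: "real^'n^'n \<Rightarrow> 'n \<Rightarrow> (real^'n) set" where
  "lV V i0 = span (range (\<lambda>k::nat. (((*v) V) ^^ k) (axis i0 1)))"

definition Lminus :: "real^'n^'n \<Rightarrow> 'n \<Rightarrow> ((real^'n) \<times> (real^'n)) set" where
  "Lminus V i0 = {\<psi>. fst \<psi> \<in> lV V i0 \<and> snd \<psi> \<in> lV V i0}"

definition expA :: "('a::real_normed_vector \<Rightarrow> 'a) \<Rightarrow> real \<Rightarrow> 'a \<Rightarrow> 'a" where
  "expA A t x = (\<Sum>k. (t ^ k / fact k) *\<^sub>R ((A ^^ k) x))"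

text \<open>lam is in the spectrum of the restriction of the real linear map f to the
 invariant subspace L: there is a nonzero complex eigenvector u + i v with u, v in L.\<close>
definition complex_eigenvalue_on :: "('a::real_vector \<Rightarrow> 'a) \<Rightarrow> 'a set \<Rightarrow> complex \<Rightarrow> bool" where
  "complex_eigenvalue_on f L lam \<longleftrightarrow> (\<exists>u v. u \<in> L \<and> v \<in> L \<and> (u \<noteq> 0 \<or> v \<noteq> 0) \<and>
      f u = Re lam *\<^sub>R u - Im lam *\<^sub>R v \<and> f v = Im lam *\<^sub>R u + Re lam *\<^sub>R v)"

end

theory Submission
  imports Defs "HOL-Real_Asymp.Real_Asymp"
begin

text \<open>
  The energy \<open>E \<psi> = \<psi> \<bullet> M \<psi> = 2 H \<psi>\<close>, with \<open>M = diag(V, 1)\<close>, decays along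
  \<open>e\<^sup>t\<^sup>A\<close> at the rate \<open>-2\<alpha> p\<^sub>1\<^sup>2\<close>. On \<open>L\<^sub>0\<close> the damped coordinate \<open>p\<^sub>1\<close> vanishes
  identically, so \<open>E\<close> is conserved there. On \<open>L\<^sub>-\<close> no nonzero trajectory keeps \<open>p\<^sub>1 = 0\<close>:
  otherwise \<open>p\<close> and \<open>V q\<close> would be orthogonal to all Krylov vectors \<open>V\<^sup>k e\<^sub>1\<close> spanning
  \<open>l\<^sub>V\<close>. Hence \<open>E\<close> drops strictly over unit time on \<open>L\<^sub>-\<close>, by a uniform factor thanks
  to compactness of the unit sphere, which gives exponential decay. The same energy balance
  yields \<open>Re \<lambda> < 0\<close> on \<open>L\<^sub>-\<close>, and splitting \<psi> along \<open>L\<^sub>- \<oplus> L\<^sub>0\<close> shows that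
  \<open>H \<longrightarrow> 0\<close> exactly on \<open>L\<^sub>-\<close>.
\<close>

section \<open>Exponential of a linear map\<close>

lemma linear_funpow: "linear (A::'a::real_vector \<Rightarrow> 'a) \<Longrightarrow> linear (A ^^ k)"
  by (induction k) (auto intro: linear_compose simp: linear_id)

lemma funpow_mem_invariant: "(\<And>x. x \<in> S \<Longrightarrow> A x \<in> S) \<Longrightarrow> x \<in> S \<Longrightarrow> (A ^^ k) x \<in> S"
  by (induction k) auto

lemma norm_funpow_le:
  fixes A :: "'a::real_normed_vector \<Rightarrow> 'a"
  assumes "\<And>x. norm (A x) \<le> K * norm x" "K \<ge> 0"
  shows "norm ((A ^^ k) x) \<le> K ^ k * norm x"
proof (induction k)
  case (Suc k)
  have "norm ((A ^^ Suc k) x) \<le> K * norm ((A ^^ k) x)" using assms(1)[of "(A ^^ k) x"] by simp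
  also have "\<dots> \<le> K * (K ^ k * norm x)" using Suc assms(2) by (rule mult_left_mono)
  finally show ?case by simp
qed simp

context
  fixes A :: "'a::euclidean_space \<Rightarrow> 'a"
  assumes lin: "linear A"
begin

text \<open>Uniqueness for \<open>z' = A z\<close> forward in time (Gronwall): \<open>e\<^sup>-\<^sup>2\<^sup>K\<^sup>s \<parallel>z s\<parallel>\<^sup>2\<close> is
  nonincreasing when \<open>K\<close> bounds \<open>A\<close>.\<close>

lemma linear_ode_zero:
  assumes z': "\<And>s. (z has_vector_derivative A (z s)) (at s)" and "z 0 = 0" and "0 \<le> t"
  shows "z t = 0"
proof -
  obtain K where K: "\<And>x. norm (A x) \<le> K * norm x" using linear_bounded_pos[OF lin] by blast
  define g where "g s = exp (- 2 * K * s) * (z s \<bullet> z s)" for s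
  have "g t \<le> g 0"
  proof (rule DERIV_nonpos_imp_nonincreasing[OF \<open>0 \<le> t\<close>])
    fix s
    have "z s \<bullet> A (z s) \<le> K * (z s \<bullet> z s)"
      using norm_cauchy_schwarz[of "z s" "A (z s)"] mult_left_mono[OF K, of "norm (z s)" "z s"]
      by (simp add: power2_norm_eq_inner[symmetric] power2_eq_square ac_simps)
    then have "exp (- 2 * K * s) * (2 * (z s \<bullet> A (z s)) - 2 * K * (z s \<bullet> z s)) \<le> 0"
      by (simp add: mult_nonneg_nonpos)
    moreover have "(g has_real_derivative exp (- 2 * K * s) * (2 * (z s \<bullet> A (z s)) - 2 * K * (z s \<bullet> z s))) (at s)"
      unfolding g_def
      using bounded_bilinear.has_vector_derivative[OF bounded_bilinear_inner z' z', of s]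
      by (auto intro!: derivative_eq_intros simp: has_real_derivative_iff_has_vector_derivative[symmetric]
          inner_commute algebra_simps)
    ultimately show "\<exists>y. (g has_real_derivative y) (at s) \<and> y \<le> 0" by blast
  qed
  then have "z t \<bullet> z t \<le> 0" by (simp add: g_def \<open>z 0 = 0\<close> mult_le_0_iff)
  then show ?thesis using inner_gt_zero_iff[of "z t"] by linarith
qed

lemma summable_expA: "summable (\<lambda>k. (t ^ k / fact k) *\<^sub>R ((A ^^ k) x))"
proof -
  obtain K where K: "K > 0" "\<And>x. norm (A x) \<le> K * norm x" using linear_bounded_pos[OF lin] by blast
  have bound: "norm ((t ^ k / fact k) *\<^sub>R ((A ^^ k) x)) \<le> inverse (fact k) * (\<bar>t\<bar> * K) ^ k * norm x" for k
  proof -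
    have "norm ((t ^ k / fact k) *\<^sub>R ((A ^^ k) x)) = (\<bar>t\<bar> ^ k / fact k) * norm ((A ^^ k) x)"
      by (simp add: power_abs)
    also have "\<dots> \<le> (\<bar>t\<bar> ^ k / fact k) * (K ^ k * norm x)"
      using K by (intro mult_left_mono norm_funpow_le) auto
    also have "\<dots> = inverse (fact k) * (\<bar>t\<bar> * K) ^ k * norm x"
      by (simp add: power_mult_distrib divide_inverse)
    finally show ?thesis .
  qed
  show ?thesis
    by (rule summable_comparison_test[OF _ summable_mult2[OF summable_exp[of "\<bar>t\<bar> * K"]]])
      (use bound in blast)
qed

lemma sums_expA: "(\<lambda>k. (t ^ k / fact k) *\<^sub>R ((A ^^ k) x)) sums expA A t x"
  unfolding expA_def by (rule summable_sums[OF summable_expA])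

lemma linear_expA: "linear (expA A t)"
proof (rule linearI)
  fix x y :: 'a and c :: real
  have "(\<lambda>k. (t ^ k / fact k) *\<^sub>R ((A ^^ k) x) + (t ^ k / fact k) *\<^sub>R ((A ^^ k) y)) sums (expA A t x + expA A t y)"
    by (intro sums_add sums_expA)
  moreover have "(\<lambda>k. (t ^ k / fact k) *\<^sub>R ((A ^^ k) x) + (t ^ k / fact k) *\<^sub>R ((A ^^ k) y))
      = (\<lambda>k. (t ^ k / fact k) *\<^sub>R ((A ^^ k) (x + y)))"
    using linear_funpow[OF lin] by (simp add: linear_add scaleR_add_right)
  ultimately show "expA A t (x + y) = expA A t x + expA A t y"
    using sums_expA[of t "x + y"] sums_unique2 by metis
  have "(\<lambda>k. c *\<^sub>R ((t ^ k / fact k) *\<^sub>R ((A ^^ k) x))) sums (c *\<^sub>R expA A t x)"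
    by (intro sums_scaleR_right sums_expA)
  moreover have "(\<lambda>k. c *\<^sub>R ((t ^ k / fact k) *\<^sub>R ((A ^^ k) x)))
      = (\<lambda>k. (t ^ k / fact k) *\<^sub>R ((A ^^ k) (c *\<^sub>R x)))"
    using linear_funpow[OF lin] by (simp add: linear_scale mult.commute)
  ultimately show "expA A t (c *\<^sub>R x) = c *\<^sub>R expA A t x"
    using sums_expA[of t "c *\<^sub>R x"] sums_unique2 by metis
qed

lemma expA_commute: "expA A t (A x) = A (expA A t x)"
proof -
  have "(\<lambda>k. A ((t ^ k / fact k) *\<^sub>R ((A ^^ k) x))) sums A (expA A t x)"
    using bounded_linear.sums[OF _ sums_expA] lin by (simp add: linear_conv_bounded_linear)
  moreover have "(\<lambda>k. A ((t ^ k / fact k) *\<^sub>R ((A ^^ k) x))) = (\<lambda>k. (t ^ k / fact k) *\<^sub>R ((A ^^ k) (A x)))"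
    by (simp add: linear_scale[OF lin] funpow_swap1)
  ultimately show ?thesis using sums_expA[of t "A x"] sums_unique2 by metis
qed

lemma expA_funpow_commute: "expA A t ((A ^^ k) x) = (A ^^ k) (expA A t x)"
  by (induction k) (simp_all add: expA_commute)

lemma expA_0: "expA A 0 x = x"
proof -
  have "(\<lambda>k. ((0::real) ^ k / fact k) *\<^sub>R ((A ^^ k) x)) = (\<lambda>k. if k = 0 then (A ^^ k) x else 0)"
    by auto
  then have "(\<lambda>k. ((0::real) ^ k / fact k) *\<^sub>R ((A ^^ k) x)) sums x"
    using sums_single[of 0 "\<lambda>k. (A ^^ k) x"] by simp
  then show ?thesis using sums_expA[of 0 x] sums_unique2 by metis
qed

lemma has_field_derivative_inner_expA:
  "((\<lambda>t. expA A t x \<bullet> b) has_field_derivative (expA A t (A x) \<bullet> b)) (at t)"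
proof -
  define c where "c n = ((A ^^ n) x \<bullet> b) / fact n" for n
  have series: "(\<lambda>n. ((s ^ n / fact n) *\<^sub>R ((A ^^ n) y)) \<bullet> b) sums (expA A s y \<bullet> b)" for s y
    by (rule bounded_linear.sums[OF bounded_linear_inner_left sums_expA])
  have power_series: "(\<lambda>n. c n * s ^ n) sums (expA A s x \<bullet> b)" for s
    using series[of s x] by (simp add: c_def ac_simps)
  have "((\<lambda>s. \<Sum>n. c n * s ^ n) has_field_derivative (\<Sum>n. diffs c n * t ^ n)) (at t)"
    using power_series by (intro termdiffs_strong_converges_everywhere) (rule sums_summable)
  moreover have "(\<lambda>s. \<Sum>n. c n * s ^ n) = (\<lambda>s. expA A s x \<bullet> b)"
    using power_series by (simp add: sums_iff)
  moreover have "(\<Sum>n. diffs c n * t ^ n) = expA A t (A x) \<bullet> b"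
    using sums_unique[OF series[of t "A x"]]
    by (simp add: diffs_def c_def funpow_Suc_right ac_simps del: funpow.simps)
  ultimately show ?thesis by simp
qed

lemma has_vector_derivative_expA: "((\<lambda>t. expA A t x) has_vector_derivative A (expA A t x)) (at t)"
  unfolding has_vector_derivative_def expA_commute[symmetric]
  using has_field_derivative_inner_expA[of x _ t]
  by (subst has_derivative_componentwise_within) (auto simp: has_field_derivative_def mult_commute_abs)

lemma expA_add:
  assumes "0 \<le> s"
  shows "expA A (s + t) x = expA A s (expA A t x)"
proof -
  define z where "z s = expA A (s + t) x - expA A s (expA A t x)" for s
  have "((\<lambda>s. expA A (s + t) x) has_vector_derivative A (expA A (s + t) x)) (at s)" for s
    using vector_diff_chain_at[OF has_vector_derivative_add_const[THEN iffD2, OF has_vector_derivative_id]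
        has_vector_derivative_expA]
    by (simp add: o_def)
  then have "(z has_vector_derivative A (z s)) (at s)" for s
    using has_vector_derivative_diff[OF _ has_vector_derivative_expA]
    unfolding z_def by (simp add: linear_diff[OF lin])
  moreover have "z 0 = 0" by (simp add: z_def expA_0)
  ultimately show ?thesis
    using linear_ode_zero[of z, OF _ _ assms] by (simp add: z_def)
qed

lemma expA_mem_closed_subspace:
  assumes S: "subspace S" "closed S" and "\<And>x. x \<in> S \<Longrightarrow> A x \<in> S" and "x \<in> S"
  shows "expA A t x \<in> S"
proof (rule closed_sequentially[OF S(2) _ sums_expA[unfolded sums_def]])
  show "(\<Sum>k<n. (t ^ k / fact k) *\<^sub>R ((A ^^ k) x)) \<in> S" for n
    using funpow_mem_invariant[of S A, OF assms(3,4)]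
    by (intro subspace_sum[OF S(1)] subspace_scale[OF S(1)])
qed

end

section \<open>The damped chain and its invariant subspaces\<close>

lemma in_span_orthogonal_eq_0:
  fixes x :: "'a::real_inner"
  assumes "x \<in> span B" and "\<And>b. b \<in> B \<Longrightarrow> x \<bullet> b = 0"
  shows "x = 0"
  using orthogonal_to_span[OF assms(1), of x] assms(2) by (simp add: orthogonal_def)

lemma symmetric_matrix_inner:
  fixes V :: "real^'n^'n"
  assumes "transpose V = V"
  shows "x \<bullet> (V *v y) = (V *v x) \<bullet> y"
  by (metis assms dot_lmul_matrix transpose_matrix_vector)

lemma oscA_Pair: "oscA V \<alpha> i0 (q, p) = (p, - (V *v q) - (\<alpha> * p $ i0) *\<^sub>R axis i0 1)"
proof -
  have "(\<chi> i. if i = i0 then p $ i else 0) = (p $ i0) *\<^sub>R axis i0 (1::real)" for p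
    by (simp add: vec_eq_iff axis_def)
  then show ?thesis by (simp add: oscA_def)
qed

lemma linear_oscA: "linear (oscA V \<alpha> i0)"
proof (rule linearI)
  fix x y :: "(real^'a) \<times> (real^'a)" and c :: real
  show "oscA V \<alpha> i0 (x + y) = oscA V \<alpha> i0 x + oscA V \<alpha> i0 y"
    by (cases x, cases y) (simp add: oscA_Pair algebra_simps)
  show "oscA V \<alpha> i0 (c *\<^sub>R x) = c *\<^sub>R oscA V \<alpha> i0 x"
    by (cases x) (simp add: oscA_Pair algebra_simps)
qed

lemma subspace_lV: "subspace (lV V i0)"
  by (simp add: lV_def)

lemma axis_in_lV: "axis i0 1 \<in> lV V i0"
  unfolding lV_def by (rule span_base) (metis funpow_0 rangeI)

lemma matrix_vector_mult_in_lV: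
  assumes "x \<in> lV V i0"
  shows "V *v x \<in> lV V i0"
proof -
  let ?g = "\<lambda>k::nat. (((*v) V) ^^ k) (axis i0 1)"
  have "(*v) V ` range ?g \<subseteq> range ?g"
    by (auto intro: range_eqI[of _ _ "Suc _"])
  then have "(*v) V ` span (range ?g) \<subseteq> span (range ?g)"
    by (metis span_linear_image[OF matrix_vector_mul_linear] span_mono span_span)
  then show ?thesis using assms by (auto simp: lV_def)
qed

lemma mem_Lminus_Pair [simp]: "(q, p) \<in> Lminus V i0 \<longleftrightarrow> q \<in> lV V i0 \<and> p \<in> lV V i0"
  by (simp add: Lminus_def)

lemma subspace_Lminus: "subspace (Lminus V i0)"
  using subspace_lV[of V i0] unfolding Lminus_def subspace_def by auto

lemma closed_Lminus: "closed (Lminus V i0)"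
  by (rule closed_subspace[OF subspace_Lminus])

lemma oscA_mem_Lminus: "\<psi> \<in> Lminus V i0 \<Longrightarrow> oscA V \<alpha> i0 \<psi> \<in> Lminus V i0"
  using subspace_lV[of V i0] axis_in_lV[of i0 V] matrix_vector_mult_in_lV[of "fst \<psi>" V i0]
  by (cases \<psi>) (auto simp: oscA_Pair subspace_diff subspace_neg subspace_scale)

lemma expA_mem_Lminus: "\<psi> \<in> Lminus V i0 \<Longrightarrow> expA (oscA V \<alpha> i0) t \<psi> \<in> Lminus V i0"
  by (rule expA_mem_closed_subspace[OF linear_oscA subspace_Lminus closed_Lminus oscA_mem_Lminus])

lemma mem_orthogonal_comp_Lminus_iff:
  "\<psi> \<in> orthogonal_comp (Lminus V i0) \<longleftrightarrow> (\<forall>x\<in>lV V i0. fst \<psi> \<bullet> x = 0 \<and> snd \<psi> \<bullet> x = 0)"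
proof
  assume \<psi>: "\<psi> \<in> orthogonal_comp (Lminus V i0)"
  show "\<forall>x\<in>lV V i0. fst \<psi> \<bullet> x = 0 \<and> snd \<psi> \<bullet> x = 0"
  proof
    fix x assume "x \<in> lV V i0"
    then have "(x, 0) \<in> Lminus V i0" "(0, x) \<in> Lminus V i0"
      using subspace_lV[of V i0] by (auto simp: subspace_0)
    then have "(x, 0) \<bullet> \<psi> = 0" "(0, x) \<bullet> \<psi> = 0"
      using \<psi> by (auto simp: orthogonal_comp_def orthogonal_def)
    then show "fst \<psi> \<bullet> x = 0 \<and> snd \<psi> \<bullet> x = 0" by (cases \<psi>) (simp add: inner_commute)
  qed
next
  assume "\<forall>x\<in>lV V i0. fst \<psi> \<bullet> x = 0 \<and> snd \<psi> \<bullet> x = 0"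
  then show "\<psi> \<in> orthogonal_comp (Lminus V i0)"
    by (cases \<psi>) (auto simp: orthogonal_comp_def orthogonal_def inner_commute)
qed

lemma oscA_mem_orthogonal_comp_Lminus:
  fixes V :: "real^'n^'n"
  assumes "transpose V = V" and "\<psi> \<in> orthogonal_comp (Lminus V i0)"
  shows "oscA V \<alpha> i0 \<psi> \<in> orthogonal_comp (Lminus V i0)"
proof -
  obtain q p where \<psi>: "\<psi> = (q, p)" by force
  have perp: "\<forall>x\<in>lV V i0. q \<bullet> x = 0 \<and> p \<bullet> x = 0"
    using assms(2) by (simp add: mem_orthogonal_comp_Lminus_iff \<psi>)
  then have "p $ i0 = 0" using axis_in_lV[of i0 V] by (auto simp: inner_axis)
  moreover have "(V *v q) \<bullet> x = 0" if "x \<in> lV V i0" for x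
    using perp matrix_vector_mult_in_lV[OF that] symmetric_matrix_inner[OF assms(1), of q x] by simp
  ultimately show ?thesis
    using perp by (simp add: \<psi> oscA_Pair mem_orthogonal_comp_Lminus_iff inner_diff_left)
qed

lemma expA_mem_orthogonal_comp_Lminus:
  fixes V :: "real^'n^'n"
  assumes "transpose V = V" and "\<psi> \<in> orthogonal_comp (Lminus V i0)"
  shows "expA (oscA V \<alpha> i0) t \<psi> \<in> orthogonal_comp (Lminus V i0)"
  using oscA_mem_orthogonal_comp_Lminus[OF assms(1)] assms(2)
  by (intro expA_mem_closed_subspace[OF linear_oscA subspace_orthogonal_comp
        closed_subspace[OF subspace_orthogonal_comp]])

section \<open>Energy\<close>

definition energy_op :: "real^'n^'n \<Rightarrow> (real^'n) \<times> (real^'n) \<Rightarrow> (real^'n) \<times> (real^'n)" where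
  "energy_op V \<psi> = (V *v fst \<psi>, snd \<psi>)"

definition energy :: "real^'n^'n \<Rightarrow> (real^'n) \<times> (real^'n) \<Rightarrow> real" where
  "energy V \<psi> = \<psi> \<bullet> energy_op V \<psi>"

lemma hamH_eq_energy: "hamH V \<psi> = energy V \<psi> / 2"
proof -
  have kinetic: "p \<bullet> p = (\<Sum>i\<in>UNIV. (p $ i)^2)" for p :: "real^'n"
    by (simp add: inner_vec_def power2_eq_square)
  have potential: "q \<bullet> (V *v q) = (\<Sum>i\<in>UNIV. \<Sum>j\<in>UNIV. q $ i * (q $ j * V $ i $ j))" for q
    by (simp add: inner_vec_def matrix_vector_mult_def sum_distrib_left ac_simps)
  show ?thesis unfolding hamH_def energy_def energy_op_def
    by (cases \<psi>) (simp add: kinetic potential field_simps)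
qed

lemma linear_energy_op: "linear (energy_op V)"
  by (rule linearI) (auto simp: energy_op_def algebra_simps)

lemma energy_op_symmetric:
  fixes V :: "real^'n^'n"
  assumes "transpose V = V"
  shows "x \<bullet> energy_op V y = energy_op V x \<bullet> y"
  by (cases x, cases y) (simp add: energy_op_def symmetric_matrix_inner[OF assms])

lemma energy_scaleR: "energy V (c *\<^sub>R x) = c^2 * energy V x"
  by (simp add: energy_def linear_scale[OF linear_energy_op] power2_eq_square)

lemma energy_0 [simp]: "energy V 0 = 0"
  by (simp add: energy_def energy_op_def zero_prod_def)

lemma continuous_on_energy_linear:
  fixes f :: "'a::euclidean_space \<Rightarrow> (real^'n) \<times> (real^'n)"
  assumes "linear f"
  shows "continuous_on S (\<lambda>x. energy V (f x))"
  unfolding energy_def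
  using assms linear_compose[OF assms linear_energy_op[of V]]
  by (intro continuous_on_inner linear_continuous_on) (simp_all add: o_def linear_conv_bounded_linear)

lemma energy_le_norm:
  obtains C where "C > 0" "\<And>x. energy V x \<le> C * (norm x)^2"
proof -
  obtain C where C: "C > 0" "\<And>x. norm (energy_op V x) \<le> C * norm x"
    using linear_bounded_pos[OF linear_energy_op] by blast
  have "energy V x \<le> C * (norm x)^2" for x
    using norm_cauchy_schwarz[of x "energy_op V x"] mult_left_mono[OF C(2)[of x], of "norm x"]
    by (simp add: energy_def power2_eq_square ac_simps)
  with C(1) show ?thesis by (rule that)
qed

lemma inner_energy_op_oscA:
  fixes V :: "real^'n^'n"
  assumes "transpose V = V"
  shows "\<psi> \<bullet> energy_op V (oscA V \<alpha> i0 \<psi>) = - \<alpha> * (snd \<psi> $ i0)^2"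
  using symmetric_matrix_inner[OF assms, of "fst \<psi>" "snd \<psi>"]
  by (cases \<psi>) (simp add: oscA_Pair energy_op_def inner_diff_right inner_axis power2_eq_square inner_commute)

lemma energy_add_orthogonal_comp:
  fixes V :: "real^'n^'n"
  assumes "transpose V = V" and "\<phi> \<in> Lminus V i0" and "\<eta> \<in> orthogonal_comp (Lminus V i0)"
  shows "energy V (\<phi> + \<eta>) = energy V \<phi> + energy V \<eta>"
proof -
  obtain q p where \<phi>: "\<phi> = (q, p)" by force
  obtain q' p' where \<eta>: "\<eta> = (q', p')" by force
  have perp: "\<forall>x\<in>lV V i0. q' \<bullet> x = 0 \<and> p' \<bullet> x = 0"
    using assms(3) by (simp add: mem_orthogonal_comp_Lminus_iff \<eta>)
  have "q \<in> lV V i0" "p \<in> lV V i0" using assms(2) by (simp_all add: \<phi>)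
  then have "p' \<bullet> p = 0" "q' \<bullet> (V *v q) = 0"
    using perp matrix_vector_mult_in_lV by blast+
  moreover have "q \<bullet> (V *v q') = 0"
    using \<open>q' \<bullet> (V *v q) = 0\<close> symmetric_matrix_inner[OF assms(1), of q q'] by (simp add: inner_commute)
  ultimately show ?thesis
    by (simp add: energy_def energy_op_def \<phi> \<eta> matrix_vector_right_distrib inner_add_left
        inner_add_right inner_commute)
qed

section \<open>Exponential stability on \<open>L\<^sub>-\<close>\<close>

locale damped_oscillator =
  fixes V :: "real^'n^'n" and \<alpha> :: real and i0 :: 'n
  assumes symmetric: "transpose V = V"
    and pos_def: "\<And>x. x \<noteq> 0 \<Longrightarrow> x \<bullet> (V *v x) > 0"
    and damping_pos: "\<alpha> > 0"
begin

abbreviation A :: "(real^'n) \<times> (real^'n) \<Rightarrow> (real^'n) \<times> (real^'n)" where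
  "A \<equiv> oscA V \<alpha> i0"

lemma linear_A: "linear A"
  by (rule linear_oscA)

lemma energy_pos:
  assumes "\<psi> \<noteq> 0"
  shows "energy V \<psi> > 0"
proof (cases \<psi>)
  case (Pair q p)
  have "q \<bullet> (V *v q) \<ge> 0" using pos_def[of q] by (cases "q = 0") auto
  moreover have "q \<noteq> 0 \<or> p \<noteq> 0" using assms Pair by (auto simp: zero_prod_def)
  ultimately show ?thesis
    using pos_def[of q] by (auto simp: Pair energy_def energy_op_def add_pos_nonneg add_nonneg_pos)
qed

lemma energy_nonneg: "energy V \<psi> \<ge> 0"
  using energy_pos[of \<psi>] by (cases "\<psi> = 0") auto

lemma energy_eq_0_iff: "energy V \<psi> = 0 \<longleftrightarrow> \<psi> = 0"
  by (metis energy_0 energy_pos less_irrefl)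

lemma energy_ge_norm:
  obtains c where "c > 0" "\<And>x. c * (norm x)^2 \<le> energy V x"
proof -
  let ?S = "sphere (0 :: (real^'n) \<times> (real^'n)) 1"
  obtain b :: "(real^'n) \<times> (real^'n)" where "b \<in> Basis" using nonempty_Basis by blast
  then have "?S \<noteq> {}" by auto
  moreover have "continuous_on ?S (energy V)"
    using continuous_on_energy_linear[OF linear_id] by (simp add: id_def)
  ultimately obtain x0 where x0: "x0 \<in> ?S" "\<And>y. y \<in> ?S \<Longrightarrow> energy V x0 \<le> energy V y"
    using continuous_attains_inf[OF compact_sphere] by blast
  have "energy V x0 * (norm x)^2 \<le> energy V x" for x
  proof (cases "x = 0")
    case False
    have "energy V x0 \<le> energy V ((1 / norm x) *\<^sub>R x)" using False by (intro x0(2)) simp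
    also have "\<dots> = energy V x / (norm x)^2" by (simp add: energy_scaleR power_divide)
    finally show ?thesis using False by (simp add: field_simps)
  qed simp
  moreover have "energy V x0 > 0" using x0(1) by (intro energy_pos) auto
  ultimately show ?thesis using that by blast
qed

lemma has_real_derivative_energy_expA:
  "((\<lambda>t. energy V (expA A t \<psi>)) has_real_derivative - 2 * \<alpha> * (snd (expA A t \<psi>) $ i0)^2) (at t)"
proof -
  let ?x = "expA A t \<psi>"
  have x': "((\<lambda>t. expA A t \<psi>) has_vector_derivative A ?x) (at t)"
    by (rule has_vector_derivative_expA[OF linear_A])
  have "bounded_linear (energy_op V)" using linear_energy_op by (simp add: linear_conv_bounded_linear)
  then have "((\<lambda>t. expA A t \<psi> \<bullet> energy_op V (expA A t \<psi>)) has_vector_derivative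
      ?x \<bullet> energy_op V (A ?x) + A ?x \<bullet> energy_op V ?x) (at t)"
    by (intro bounded_bilinear.has_vector_derivative[OF bounded_bilinear_inner x']
        bounded_linear.has_vector_derivative[OF _ x'])
  moreover have "A ?x \<bullet> energy_op V ?x = ?x \<bullet> energy_op V (A ?x)"
    using energy_op_symmetric[OF symmetric, of ?x "A ?x"] by (simp add: inner_commute)
  ultimately show ?thesis
    using inner_energy_op_oscA[OF symmetric, of ?x \<alpha> i0]
    by (simp add: energy_def has_real_derivative_iff_has_vector_derivative mult.assoc)
qed

lemma energy_expA_antimono:
  assumes "s \<le> t"
  shows "energy V (expA A t \<psi>) \<le> energy V (expA A s \<psi>)"
proof (rule DERIV_nonpos_imp_nonincreasing[OF assms])
  fix x
  show "\<exists>y. ((\<lambda>t. energy V (expA A t \<psi>)) has_real_derivative y) (at x) \<and> y \<le> 0"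
    using has_real_derivative_energy_expA damping_pos by (intro exI conjI) (assumption, simp)
qed

lemma energy_expA_orthogonal_comp:
  assumes "\<psi> \<in> orthogonal_comp (Lminus V i0)"
  shows "energy V (expA A t \<psi>) = energy V \<psi>"
proof -
  have "expA A s \<psi> \<in> orthogonal_comp (Lminus V i0)" for s
    by (rule expA_mem_orthogonal_comp_Lminus[OF symmetric assms])
  then have "snd (expA A s \<psi>) \<bullet> axis i0 1 = 0" for s
    using axis_in_lV[of i0 V] by (simp add: mem_orthogonal_comp_Lminus_iff)
  then have "snd (expA A s \<psi>) $ i0 = 0" for s
    by (simp add: inner_axis)
  then have "((\<lambda>t. energy V (expA A t \<psi>)) has_real_derivative 0) (at s)" for s
    using has_real_derivative_energy_expA[of \<psi> s] by simp
  then show ?thesis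
    using DERIV_isconst_all[of "\<lambda>t. energy V (expA A t \<psi>)" t 0] by (simp add: expA_0[OF linear_A])
qed

text \<open>Along an undamped trajectory
  \<open>A\<^sup>2\<close> acts as \<open>(q, p) \<mapsto> -(V q, V p)\<close>, which lets an induction move one power of \<open>V\<close>
  at a time onto the generators \<open>V\<^sup>k e\<^sub>1\<close>.\<close>

lemma Lminus_observable:
  assumes "\<phi> \<in> Lminus V i0" and undamped: "\<And>k. snd ((A ^^ k) \<phi>) $ i0 = 0"
  shows "\<phi> = 0"
proof -
  let ?g = "\<lambda>k::nat. (((*v) V) ^^ k) (axis i0 1)"
  have "snd \<psi> \<bullet> ?g k = 0 \<and> (V *v fst \<psi>) \<bullet> ?g k = 0"
    if "\<And>j. snd ((A ^^ j) \<psi>) $ i0 = 0" for k \<psi>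
    using that
  proof (induction k arbitrary: \<psi>)
    case 0
    obtain q p where \<psi>: "\<psi> = (q, p)" by force
    have "p $ i0 = 0" using "0.prems"[of 0] by (simp add: \<psi>)
    moreover have "snd (A \<psi>) $ i0 = 0" using "0.prems"[of 1] by simp
    ultimately show ?case by (simp add: \<psi> oscA_Pair inner_axis)
  next
    case (Suc k)
    obtain q p where \<psi>: "\<psi> = (q, p)" by force
    have p0: "p $ i0 = 0" using Suc.prems[of 0] by (simp add: \<psi>)
    have Vq0: "(V *v q) $ i0 = 0" using Suc.prems[of 1] p0 by (simp add: \<psi> oscA_Pair)
    have "(A ^^ 2) \<psi> = (- (V *v q), - (V *v p))"
      using p0 Vq0 linear_neg[OF matrix_vector_mul_linear[of V]]
      by (simp add: \<psi> oscA_Pair numeral_2_eq_2)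
    moreover have "snd ((A ^^ j) ((A ^^ 2) \<psi>)) $ i0 = 0" for j
      using Suc.prems[of "j + 2"] by (simp only: funpow_add comp_def)
    ultimately have "(V *v p) \<bullet> ?g k = 0" "(V *v (V *v q)) \<bullet> ?g k = 0"
      using Suc.IH[of "(A ^^ 2) \<psi>"] linear_neg[OF matrix_vector_mul_linear[of V]] by simp_all
    then show ?case by (simp add: \<psi> symmetric_matrix_inner[OF symmetric])
  qed
  with undamped have "snd \<phi> \<bullet> ?g k = 0" "(V *v fst \<phi>) \<bullet> ?g k = 0" for k
    by blast+
  moreover have "snd \<phi> \<in> lV V i0" "V *v fst \<phi> \<in> lV V i0"
    using assms(1) matrix_vector_mult_in_lV by (auto simp: Lminus_def)
  ultimately have "snd \<phi> = 0" "V *v fst \<phi> = 0"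
    by (auto simp: lV_def intro: in_span_orthogonal_eq_0)
  then show ?thesis using pos_def[of "fst \<phi>"] by (auto simp: prod_eq_iff)
qed

lemma eigenvalue_Re_neg:
  assumes "complex_eigenvalue_on A (Lminus V i0) \<mu>"
  shows "Re \<mu> < 0"
proof -
  define a b where "a = Re \<mu>" and "b = Im \<mu>"
  obtain u v where uv: "u \<in> Lminus V i0" "v \<in> Lminus V i0" "u \<noteq> 0 \<or> v \<noteq> 0"
    and Au: "A u = a *\<^sub>R u - b *\<^sub>R v" and Av: "A v = b *\<^sub>R u + a *\<^sub>R v"
    using assms unfolding complex_eigenvalue_on_def a_def b_def by blast
  have "u \<bullet> energy_op V (A u) = a * energy V u - b * (u \<bullet> energy_op V v)"
    by (simp add: Au linear_diff[OF linear_energy_op] linear_scale[OF linear_energy_op]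
        inner_diff_right energy_def)
  moreover have "v \<bullet> energy_op V (A v) = b * (v \<bullet> energy_op V u) + a * energy V v"
    by (simp add: Av linear_add[OF linear_energy_op] linear_scale[OF linear_energy_op]
        inner_add_right energy_def)
  moreover have "u \<bullet> energy_op V v = v \<bullet> energy_op V u"
    using energy_op_symmetric[OF symmetric, of u v] by (simp add: inner_commute)
  ultimately have balance: "a * (energy V u + energy V v) = - \<alpha> * ((snd u $ i0)^2 + (snd v $ i0)^2)"
    using inner_energy_op_oscA[OF symmetric, of u \<alpha> i0] inner_energy_op_oscA[OF symmetric, of v \<alpha> i0]
    by (simp add: algebra_simps)
  have pos: "energy V u + energy V v > 0"
    using uv(3) energy_pos[of u] energy_pos[of v] energy_nonneg[of u] energy_nonneg[of v] by auto
  have "a * (energy V u + energy V v) \<le> 0"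
    using balance damping_pos by simp
  with pos have "a \<le> 0"
    by (metis mult_pos_pos not_le)
  moreover have "a \<noteq> 0"
  proof
    assume "a = 0"
    then have "(snd u $ i0)^2 + (snd v $ i0)^2 = 0" using balance damping_pos by simp
    then have "u \<in> {x. snd x $ i0 = 0}" "v \<in> {x. snd x $ i0 = 0}"
      by (simp_all add: add_nonneg_eq_0_iff)
    moreover have "subspace {x :: (real^'n) \<times> (real^'n). snd x $ i0 = 0}"
      by (auto simp: subspace_def)
    ultimately have undamped: "span {u, v} \<subseteq> {x. snd x $ i0 = 0}"
      by (intro span_minimal) auto
    have "A u \<in> span {u, v}" "A v \<in> span {u, v}"
      unfolding Au Av \<open>a = 0\<close> by (simp_all add: span_base span_neg span_add span_scale)
    then have "span (A ` {u, v}) \<subseteq> span {u, v}"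
      by (intro span_minimal) auto
    then have "A x \<in> span {u, v}" if "x \<in> span {u, v}" for x
      using that span_linear_image[OF linear_A, of "{u, v}"] by blast
    then have "(A ^^ k) w \<in> span {u, v}" if "w \<in> {u, v}" for w k
      using funpow_mem_invariant span_base[OF that] by metis
    then have "snd ((A ^^ k) u) $ i0 = 0" "snd ((A ^^ k) v) $ i0 = 0" for k
      using undamped by blast+
    then have "u = 0" "v = 0"
      using Lminus_observable uv(1,2) by blast+
    with uv(3) show False by simp
  qed
  ultimately show ?thesis by (simp add: a_def)
qed

text \<open>If no energy is lost on \<open>[0, 1]\<close>, then \<open>p\<^sub>1\<close> vanishes on \<open>(0, 1)\<close> together with all its
  time derivatives; at \<open>t = 1/2\<close> these are the \<open>p\<^sub>1\<close>-coordinates of \<open>A\<^sup>k e\<^sup>A\<^sup>/\<^sup>2 \<psi>\<close>.\<close>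

lemma energy_expA_1_less:
  assumes "\<psi> \<in> Lminus V i0" and "\<psi> \<noteq> 0"
  shows "energy V (expA A 1 \<psi>) < energy V \<psi>"
proof (rule ccontr)
  assume "\<not> energy V (expA A 1 \<psi>) < energy V \<psi>"
  then have const: "energy V (expA A s \<psi>) = energy V \<psi>" if "0 \<le> s" "s \<le> 1" for s
    using energy_expA_antimono[OF that(1), of \<psi>] energy_expA_antimono[OF that(2), of \<psi>]
    by (simp add: expA_0[OF linear_A])
  define h where "h k s = snd (expA A s ((A ^^ k) \<psi>)) $ i0" for k s
  have h': "(h k has_real_derivative h (Suc k) s) (at s)" for k s
  proof -
    have "bounded_linear (\<lambda>x::(real^'n) \<times> (real^'n). snd x $ i0)"
      using bounded_linear_compose[OF bounded_linear_vec_nth[of i0] bounded_linear_snd] by (simp add: o_def)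
    from bounded_linear.has_vector_derivative[OF this has_vector_derivative_expA[OF linear_A, of "(A ^^ k) \<psi>" s]]
    show ?thesis unfolding h_def
      by (simp add: has_real_derivative_iff_has_vector_derivative expA_commute[OF linear_A])
  qed
  have "h k s = 0" if "0 < s" "s < 1" for k s
    using that
  proof (induction k arbitrary: s)
    case 0
    have "- 2 * \<alpha> * (snd (expA A s \<psi>) $ i0)^2 = 0"
    proof (rule DERIV_local_const[OF has_real_derivative_energy_expA])
      show "0 < min s (1 - s)" using 0 by simp
      show "\<forall>y. \<bar>s - y\<bar> < min s (1 - s) \<longrightarrow> energy V (expA A s \<psi>) = energy V (expA A y \<psi>)"
        using 0 by (auto simp: const)
    qed
    then show ?case using damping_pos by (simp add: h_def)
  next
    case (Suc k)
    show ?case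
    proof (rule DERIV_local_const[OF h'[of k s]])
      show "0 < min s (1 - s)" using Suc by simp
      show "\<forall>y. \<bar>s - y\<bar> < min s (1 - s) \<longrightarrow> h k s = h k y"
        using Suc.IH Suc.prems by (auto simp: abs_if split: if_splits)
    qed
  qed
  then have "snd ((A ^^ k) (expA A (1/2) \<psi>)) $ i0 = 0" for k
    by (simp add: h_def expA_funpow_commute[OF linear_A, symmetric])
  then have "expA A (1/2) \<psi> = 0"
    by (rule Lminus_observable[OF expA_mem_Lminus[OF assms(1)]])
  then have "energy V \<psi> = 0"
    using const[of "1/2"] by simp
  with assms(2) show False by (simp add: energy_eq_0_iff)
qed

lemma energy_expA_1_contraction:
  obtains \<delta> where "0 < \<delta>" "\<delta> < 1"
    "\<And>\<psi>. \<psi> \<in> Lminus V i0 \<Longrightarrow> energy V (expA A 1 \<psi>) \<le> \<delta> * energy V \<psi>"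
proof -
  let ?S = "sphere 0 1 \<inter> Lminus V i0"
  let ?ratio = "\<lambda>\<psi>. energy V (expA A 1 \<psi>) / energy V \<psi>"
  have lin: "linear (expA A 1)" by (rule linear_expA[OF linear_A])
  have "(axis i0 1, 0) \<in> ?S"
    using axis_in_lV[of i0 V] subspace_0[OF subspace_lV] by simp
  then have "?S \<noteq> {}" by blast
  moreover have "energy V \<psi> \<noteq> 0" if "\<psi> \<in> ?S" for \<psi>
  proof -
    have "\<psi> \<noteq> 0" using that by auto
    then show ?thesis using energy_pos by fastforce
  qed
  then have "continuous_on ?S ?ratio"
    using continuous_on_energy_linear[OF lin] continuous_on_energy_linear[OF linear_id]
    by (intro continuous_on_divide) (auto simp: id_def)
  ultimately obtain \<psi>0 where \<psi>0: "\<psi>0 \<in> ?S" "\<And>\<psi>. \<psi> \<in> ?S \<Longrightarrow> ?ratio \<psi> \<le> ?ratio \<psi>0"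
    using continuous_attains_sup[OF compact_Int_closed[OF compact_sphere closed_Lminus]] by blast
  then have "\<psi>0 \<noteq> 0" by auto
  then have "?ratio \<psi>0 < 1"
    using energy_expA_1_less[of \<psi>0] energy_pos[of \<psi>0] \<psi>0(1) by (simp add: divide_less_eq)
  define \<delta> where "\<delta> = max (?ratio \<psi>0) (1/2)"
  show ?thesis
  proof (rule that)
    show "0 < \<delta>" "\<delta> < 1" using \<open>?ratio \<psi>0 < 1\<close> by (auto simp: \<delta>_def)
    fix \<psi> assume \<psi>: "\<psi> \<in> Lminus V i0"
    show "energy V (expA A 1 \<psi>) \<le> \<delta> * energy V \<psi>"
    proof (cases "\<psi> = 0")
      case True
      then show ?thesis by (simp add: linear_0[OF lin])
    next
      case False
      have "(1 / norm \<psi>) *\<^sub>R \<psi> \<in> ?S"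
        using \<psi> False by (simp add: subspace_scale[OF subspace_Lminus])
      then have "?ratio ((1 / norm \<psi>) *\<^sub>R \<psi>) \<le> \<delta>"
        using \<psi>0(2) by (fastforce simp: \<delta>_def)
      then have "?ratio \<psi> \<le> \<delta>"
        using False by (simp add: linear_scale[OF lin] energy_scaleR)
      then show ?thesis using energy_pos[OF False] by (simp add: divide_le_eq)
    qed
  qed
qed

lemma energy_expA_decay:
  obtains \<delta> where "0 < \<delta>" "\<delta> < 1"
    "\<And>t \<psi>. 0 \<le> t \<Longrightarrow> \<psi> \<in> Lminus V i0 \<Longrightarrow> energy V (expA A t \<psi>) \<le> \<delta> powr (t - 1) * energy V \<psi>"
proof -
  obtain \<delta> where \<delta>: "0 < \<delta>" "\<delta> < 1"
    and contraction: "\<And>\<psi>. \<psi> \<in> Lminus V i0 \<Longrightarrow> energy V (expA A 1 \<psi>) \<le> \<delta> * energy V \<psi>"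
    using energy_expA_1_contraction by blast
  have iterate: "energy V (expA A (real n) \<psi>) \<le> \<delta> ^ n * energy V \<psi>" if "\<psi> \<in> Lminus V i0" for n \<psi>
  proof (induction n)
    case (Suc n)
    have "expA A (real (Suc n)) \<psi> = expA A 1 (expA A (real n) \<psi>)"
      using expA_add[OF linear_A, of 1 "real n" \<psi>] by (simp add: add.commute)
    also have "energy V \<dots> \<le> \<delta> * energy V (expA A (real n) \<psi>)"
      by (rule contraction[OF expA_mem_Lminus[OF that]])
    also have "\<dots> \<le> \<delta> * (\<delta> ^ n * energy V \<psi>)"
      using Suc \<delta>(1) by (simp add: mult_left_mono)
    finally show ?case by simp
  qed (simp add: expA_0[OF linear_A])
  show ?thesis
  proof (rule that[OF \<delta>])
    fix t :: real and \<psi> assume "0 \<le> t" and \<psi>: "\<psi> \<in> Lminus V i0"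
    define n where "n = nat \<lfloor>t\<rfloor>"
    have "real n \<le> t" "t - 1 \<le> real n" using \<open>0 \<le> t\<close> by (simp_all add: n_def)
    have "energy V (expA A t \<psi>) \<le> energy V (expA A (real n) \<psi>)"
      by (rule energy_expA_antimono[OF \<open>real n \<le> t\<close>])
    also have "\<dots> \<le> \<delta> powr (real n) * energy V \<psi>"
      using iterate[OF \<psi>] \<delta>(1) by (simp add: powr_realpow)
    also have "\<dots> \<le> \<delta> powr (t - 1) * energy V \<psi>"
      using \<delta> \<open>t - 1 \<le> real n\<close> energy_nonneg by (intro mult_right_mono powr_mono') auto
    finally show "energy V (expA A t \<psi>) \<le> \<delta> powr (t - 1) * energy V \<psi>" .
  qed
qed

lemma norm_expA_decay:
  "\<exists>C k. k > 0 \<and> (\<forall>t\<ge>0. \<forall>\<psi>\<in>Lminus V i0. norm (expA A t \<psi>) \<le> C * exp (- k * t) * norm \<psi>)"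
proof -
  obtain \<delta> where \<delta>: "0 < \<delta>" "\<delta> < 1"
    and decay: "\<And>t \<psi>. 0 \<le> t \<Longrightarrow> \<psi> \<in> Lminus V i0 \<Longrightarrow> energy V (expA A t \<psi>) \<le> \<delta> powr (t - 1) * energy V \<psi>"
    using energy_expA_decay by blast
  obtain c where c: "c > 0" "\<And>x. c * (norm x)^2 \<le> energy V x" using energy_ge_norm by blast
  obtain C where C: "C > 0" "\<And>x. energy V x \<le> C * (norm x)^2" using energy_le_norm by blast
  define k where "k = - ln \<delta> / 2"
  define D where "D = sqrt (C / (c * \<delta>))"
  have "norm (expA A t \<psi>) \<le> D * exp (- k * t) * norm \<psi>" if "0 \<le> t" "\<psi> \<in> Lminus V i0" for t \<psi>
  proof (rule power2_le_imp_le)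
    have "c * (norm (expA A t \<psi>))^2 \<le> \<delta> powr (t - 1) * (C * (norm \<psi>)^2)"
      using c(2)[of "expA A t \<psi>"] decay[OF that] mult_left_mono[OF C(2)[of \<psi>], of "\<delta> powr (t - 1)"]
      by simp
    moreover have "\<delta> powr (t - 1) = (exp (- k * t))^2 / \<delta>"
    proof -
      have "(exp (- k * t))^2 = \<delta> powr t"
        using \<delta>(1) by (simp add: k_def powr_def power2_eq_square exp_add[symmetric] algebra_simps)
      then show ?thesis using \<delta>(1) by (simp add: powr_diff)
    qed
    ultimately show "(norm (expA A t \<psi>))^2 \<le> (D * exp (- k * t) * norm \<psi>)^2"
      using c(1) C(1) \<delta>(1) by (simp add: D_def power_mult_distrib field_simps)
    show "0 \<le> D * exp (- k * t) * norm \<psi>" using c(1) C(1) \<delta>(1) by (simp add: D_def)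
  qed
  moreover have "k > 0" using \<delta> by (simp add: k_def)
  ultimately show ?thesis by blast
qed

lemma energy_expA_tendsto_0:
  assumes "\<psi> \<in> Lminus V i0"
  shows "((\<lambda>t. energy V (expA A t \<psi>)) \<longlongrightarrow> 0) at_top"
proof -
  obtain \<delta> where \<delta>: "0 < \<delta>" "\<delta> < 1"
    and decay: "\<And>t \<psi>. 0 \<le> t \<Longrightarrow> \<psi> \<in> Lminus V i0 \<Longrightarrow> energy V (expA A t \<psi>) \<le> \<delta> powr (t - 1) * energy V \<psi>"
    using energy_expA_decay by blast
  show ?thesis
  proof (rule tendsto_sandwich[of "\<lambda>_. 0" _ _ "\<lambda>t. \<delta> powr (t - 1) * energy V \<psi>"])
    show "\<forall>\<^sub>F t in at_top. 0 \<le> energy V (expA A t \<psi>)"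
      by (simp add: energy_nonneg)
    show "\<forall>\<^sub>F t in at_top. energy V (expA A t \<psi>) \<le> \<delta> powr (t - 1) * energy V \<psi>"
      using eventually_ge_at_top[of "0::real"] by eventually_elim (rule decay[OF _ assms])
    have "((\<lambda>t::real. \<delta> powr (t - 1)) \<longlongrightarrow> 0) at_top"
      using \<delta> by real_asymp
    then show "((\<lambda>t. \<delta> powr (t - 1) * energy V \<psi>) \<longlongrightarrow> 0) at_top"
      by (rule tendsto_mult_left_zero)
  qed simp
qed

lemma Lminus_eq_energy_tendsto_0:
  "Lminus V i0 = {\<psi>. ((\<lambda>t. energy V (expA A t \<psi>)) \<longlongrightarrow> 0) at_top}"
proof (intro set_eqI iffI CollectI)
  fix \<psi> assume "\<psi> \<in> {\<psi>. ((\<lambda>t. energy V (expA A t \<psi>)) \<longlongrightarrow> 0) at_top}"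
  then have lim: "((\<lambda>t. energy V (expA A t \<psi>)) \<longlongrightarrow> 0) at_top" by simp
  obtain \<phi> \<eta> where \<phi>: "\<phi> \<in> span (Lminus V i0)" and \<eta>: "\<And>w. w \<in> span (Lminus V i0) \<Longrightarrow> orthogonal \<eta> w"
    and \<psi>: "\<psi> = \<phi> + \<eta>"
    using orthogonal_subspace_decomp_exists[of "Lminus V i0" \<psi>] by blast
  have \<phi>L: "\<phi> \<in> Lminus V i0" using \<phi> span_eq_iff[THEN iffD2, OF subspace_Lminus[of V i0]] by simp
  have \<eta>L: "\<eta> \<in> orthogonal_comp (Lminus V i0)"
    using \<eta> span_superset[of "Lminus V i0"] by (auto simp: orthogonal_comp_def orthogonal_commute)
  have "energy V (expA A t \<psi>) = energy V (expA A t \<phi>) + energy V \<eta>" for t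
    using energy_add_orthogonal_comp[OF symmetric expA_mem_Lminus[OF \<phi>L]
        expA_mem_orthogonal_comp_Lminus[OF symmetric \<eta>L]]
      energy_expA_orthogonal_comp[OF \<eta>L] linear_add[OF linear_expA[OF linear_A]]
    by (simp add: \<psi>)
  then have "((\<lambda>t::real. energy V \<eta>) \<longlongrightarrow> 0) at_top"
    using tendsto_diff[OF lim energy_expA_tendsto_0[OF \<phi>L]] by simp
  then have "\<eta> = 0" by (simp add: tendsto_const_iff energy_eq_0_iff)
  with \<phi>L \<psi> show "\<psi> \<in> Lminus V i0" by simp
qed (rule energy_expA_tendsto_0)

end

theorem mainTheorem16:
  fixes V :: "real^'n^'n" and \<alpha> :: real and i0 :: 'n
  assumes symm: "transpose V = V"
    and posdef: "\<forall>x::real^'n. x \<noteq> 0 \<longrightarrow> x \<bullet> (V *v x) > 0"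
    and alpha: "\<alpha> > 0"
  shows "oscA V \<alpha> i0 ` Lminus V i0 \<subseteq> Lminus V i0
    \<and> oscA V \<alpha> i0 ` orthogonal_comp (Lminus V i0) \<subseteq> orthogonal_comp (Lminus V i0)
    \<and> (\<forall>lam. complex_eigenvalue_on (oscA V \<alpha> i0) (Lminus V i0) lam \<longrightarrow> Re lam < 0)
    \<and> (\<exists>C k. k > 0 \<and> (\<forall>t\<ge>0. \<forall>\<psi>\<in>Lminus V i0.
          norm (expA (oscA V \<alpha> i0) t \<psi>) \<le> C * exp (- k * t) * norm \<psi>))
    \<and> Lminus V i0 = {\<psi>. ((\<lambda>t. hamH V (expA (oscA V \<alpha> i0) t \<psi>)) \<longlongrightarrow> 0) at_top}"
proof -
  interpret damped_oscillator V \<alpha> i0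
    using assms by unfold_locales auto
  have "((\<lambda>t. hamH V (expA A t \<psi>)) \<longlongrightarrow> 0) at_top \<longleftrightarrow> ((\<lambda>t. energy V (expA A t \<psi>)) \<longlongrightarrow> 0) at_top"
    for \<psi>
    using tendsto_mult_right_iff[of "1/2" "\<lambda>t. energy V (expA A t \<psi>)" 0 at_top]
    by (simp add: hamH_eq_energy)
  then have "Lminus V i0 = {\<psi>. ((\<lambda>t. hamH V (expA A t \<psi>)) \<longlongrightarrow> 0) at_top}"
    using Lminus_eq_energy_tendsto_0 by simp
  moreover have "oscA V \<alpha> i0 ` Lminus V i0 \<subseteq> Lminus V i0"
    using oscA_mem_Lminus by blast
  moreover have "oscA V \<alpha> i0 ` orthogonal_comp (Lminus V i0) \<subseteq> orthogonal_comp (Lminus V i0)"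
    using oscA_mem_orthogonal_comp_Lminus[OF symm] by blast
  ultimately show ?thesis
    using eigenvalue_Re_neg norm_expA_decay by blast
qed

end
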